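(* Let $\omega$ be a non-quasianalytic weight function and $\sigma$ a heir of $\omega$, with associated weight matrices $\{W^x\}_{x>0}$ and $\{S^x\}_{x>0}$ respectively. Then there is $C\ge1$ such that for all $x>0$ and all $k\in\mathbb{N}$, $S^x_k\le e^{1/x}W^{Cx}_k$.
   Context: A weight function is a continuous increasing $\omega:[0,\infty)\to[0,\infty)$ with $\omega(0)=0$, $\omega(t)\to\infty$, $\omega(2t)=O(\omega(t))$, $\omega(t)=O(t)$, $\log t=o(\omega(t))$, and $\varphi_\omega(t)=\omega(e^t)$ convex; it is non-quasianalytic if $\int_0^\infty\frac{\omega(t)}{1+t^2}dt<\infty$. Normalizing $\omega|_{[0,1]}=0$, $\varphi_\omega^*(t)=\sup_{s\ge0}(st-\varphi_\omega(s))$ and the weight matrix is $W^x_k=\exp(\frac1x\varphi_\omega^*(xk))$; likewise $S^x_k=\exp(\frac1x\varphi^*_\sigma(xk))$. A weight function $\sigma$ is a heir of $\omega$ if $\sigma(t)=o(t)$ as $t\to\infty$ and there is $C>0$ with $\int_1^\infty\frac{\omega(tu)}{u^2}du\le C\sigma(t)+C$ for all $t>0$. *)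

theory Defs
  imports "HOL-Analysis.Analysis" "HOL-Library.Landau_Symbols"
begin

definition weight_function :: "(real \<Rightarrow> real) \<Rightarrow> bool" where
  "weight_function \<omega> \<longleftrightarrow>
     continuous_on {0..} \<omega> \<and>
     mono_on {0..} \<omega> \<and>
     (\<forall>t\<ge>0. \<omega> t \<ge> 0) \<and>
     \<omega> 0 = 0 \<and>
     filterlim \<omega> at_top at_top \<and>
     (\<lambda>t. \<omega> (2 * t)) \<in> O[at_top](\<omega>) \<and>
     \<omega> \<in> O[at_top](\<lambda>t. t) \<and>
     ln \<in> o[at_top](\<omega>) \<and>
     convex_on UNIV (\<lambda>t. \<omega> (exp t))"

definition non_quasianalytic :: "(real \<Rightarrow> real) \<Rightarrow> bool" where
  "non_quasianalytic \<omega> \<longleftrightarrow> (\<lambda>t. \<omega> t / (1 + t\<^sup>2)) integrable_on {0..}"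

text \<open>Young conjugate of \<open>\<phi>\<^sub>\<omega>(t) = \<omega>(e^t)\<close>.\<close>
definition phi_conj :: "(real \<Rightarrow> real) \<Rightarrow> real \<Rightarrow> real" where
  "phi_conj \<omega> t = (SUP s\<in>{0..}. s * t - \<omega> (exp s))"

definition weight_matrix :: "(real \<Rightarrow> real) \<Rightarrow> real \<Rightarrow> nat \<Rightarrow> real" where
  "weight_matrix \<omega> x k = exp (phi_conj \<omega> (x * real k) / x)"

definition heir :: "(real \<Rightarrow> real) \<Rightarrow> (real \<Rightarrow> real) \<Rightarrow> bool" where
  "heir \<sigma> \<omega> \<longleftrightarrow> weight_function \<sigma> \<and> \<sigma> \<in> o[at_top](\<lambda>t. t) \<and>
     (\<exists>C>0. \<forall>t>0. (\<lambda>u. \<omega> (t * u) / u\<^sup>2) integrable_on {1..} \<and>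
        integral {1..} (\<lambda>u. \<omega> (t * u) / u\<^sup>2) \<le> C * \<sigma> t + C)"

end

theory Submission
  imports Defs
begin

text \<open>Comparing \<open>\<omega>(t)\<close> with \<open>\<omega>(tu)\<close> for \<open>u \<ge> 1\<close> gives \<open>\<omega>(t) \<le> \<integral>\<^sub>1\<^sup>\<infinity> \<omega>(tu)/u\<^sup>2 du \<le> C\<sigma>(t) + C\<close>,
  i.e. \<open>\<omega> \<le> D(\<sigma> + 1)\<close> with \<open>D = max C 1\<close>. Young conjugation reverses this pointwise
  inequality and rescales it: \<open>\<phi>\<^sub>\<sigma>\<^sup>*(y) \<le> \<phi>\<^sub>\<omega>\<^sup>*(Dy)/D + 1\<close>, which after dividing by \<open>x\<close> and
  exponentiating is the claim with \<open>C = D\<close>.\<close>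

lemma bdd_above_phi_conj:
  fixes \<omega> :: "real \<Rightarrow> real"
  assumes ln_small: "ln \<in> o[at_top](\<omega>)" and nonneg: "\<And>t. t \<ge> 0 \<Longrightarrow> \<omega> t \<ge> 0"
    and a: "a \<ge> 0"
  shows "bdd_above ((\<lambda>s. s * a - \<omega> (exp s)) ` {0..})"
proof -
  have "\<forall>\<^sub>F t in at_top. norm (ln t) \<le> (1 / (a + 1)) * norm (\<omega> t)"
    using landau_o.smallD[OF ln_small, of "1 / (a + 1)"] a by simp
  then obtain T where T: "\<And>t. t \<ge> T \<Longrightarrow> norm (ln t) \<le> (1 / (a + 1)) * norm (\<omega> t)"
    by (auto simp: eventually_at_top_linorder)
  define S where "S = ln (max T 1)"
  have "S \<ge> 0" unfolding S_def by simp
  show ?thesis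
  proof (rule bdd_aboveI2)
    fix s :: real assume s: "s \<in> {0..}"
    show "s * a - \<omega> (exp s) \<le> a * S"
    proof (cases "s \<ge> S")
      case True
      have "exp s \<ge> max T 1" using True unfolding S_def
        by (metis exp_ln exp_le_cancel_iff max.strict_coboundedI2 zero_less_one)
      then have "norm (ln (exp s)) \<le> (1 / (a + 1)) * norm (\<omega> (exp s))"
        using T by (meson max.bounded_iff)
      then have "s * (a + 1) \<le> \<omega> (exp s)"
        using s a nonneg[of "exp s"] by (simp add: field_simps)
      then show ?thesis using s a \<open>S \<ge> 0\<close>
        by (simp add: algebra_simps) (smt (verit) mult_nonneg_nonneg)
    next
      case False
      then have "s * a \<le> S * a" using a by (intro mult_right_mono) auto
      then show ?thesis using nonneg[of "exp s"] by (simp add: mult.commute)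
    qed
  qed
qed

lemma le_integral_dilation:
  fixes \<omega> :: "real \<Rightarrow> real"
  assumes mono: "mono_on {0..} \<omega>" and t: "t > 0"
    and int: "(\<lambda>u. \<omega> (t * u) / u\<^sup>2) integrable_on {1..}"
  shows "\<omega> t \<le> integral {1..} (\<lambda>u. \<omega> (t * u) / u\<^sup>2)"
proof -
  have "((\<lambda>u::real. 1 / u ^ 2) has_integral 1) {1..}"
    using has_integral_inverse_power_to_inf[of 2 1] by simp
  then have "((\<lambda>u::real. \<omega> t * (1 / u ^ 2)) has_integral \<omega> t * 1) {1..}"
    by (rule has_integral_mult_right)
  then have "\<omega> t * 1 \<le> integral {1..} (\<lambda>u. \<omega> (t * u) / u\<^sup>2)"
  proof (rule has_integral_le[OF _ integrable_integral[OF int]])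
    fix u :: real assume u: "u \<in> {1..}"
    have "\<omega> t \<le> \<omega> (t * u)" using u t
      by (intro mono_onD[OF mono]) (auto simp: mult_le_cancel_left1)
    then show "\<omega> t * (1 / u ^ 2) \<le> \<omega> (t * u) / u\<^sup>2"
      using u by (simp add: divide_right_mono)
  qed
  then show ?thesis by simp
qed

lemma heir_dominates:
  assumes wf: "weight_function \<omega>" and heir: "heir \<sigma> \<omega>"
  obtains D where "D \<ge> 1" and "\<And>t. t > 0 \<Longrightarrow> \<omega> t \<le> D * (\<sigma> t + 1)"
proof -
  obtain C where C: "\<And>t. t > 0 \<Longrightarrow> (\<lambda>u. \<omega> (t * u) / u\<^sup>2) integrable_on {1..} \<and>
      integral {1..} (\<lambda>u. \<omega> (t * u) / u\<^sup>2) \<le> C * \<sigma> t + C"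
    using heir unfolding heir_def by blast
  have mono: "mono_on {0..} \<omega>" using wf unfolding weight_function_def by blast
  have \<sigma>_nonneg: "\<And>t. t \<ge> 0 \<Longrightarrow> \<sigma> t \<ge> 0"
    using heir unfolding heir_def weight_function_def by blast
  have "\<omega> t \<le> max C 1 * (\<sigma> t + 1)" if t: "t > 0" for t
  proof -
    have "\<omega> t \<le> C * (\<sigma> t + 1)"
      using le_integral_dilation[OF mono t] C[OF t] by (simp add: algebra_simps)
    also have "\<dots> \<le> max C 1 * (\<sigma> t + 1)"
      using \<sigma>_nonneg[of t] t by (intro mult_right_mono) auto
    finally show ?thesis .
  qed
  then show thesis by (intro that[of "max C 1"]) auto
qed

lemma phi_conj_le_rescaled:
  fixes \<omega> \<sigma> :: "real \<Rightarrow> real"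
  assumes ln_small: "ln \<in> o[at_top](\<omega>)" and nonneg: "\<And>t. t \<ge> 0 \<Longrightarrow> \<omega> t \<ge> 0"
    and D: "D > 0" and dom: "\<And>t. t \<ge> 1 \<Longrightarrow> \<omega> t \<le> D * (\<sigma> t + A)"
    and y: "y \<ge> 0"
  shows "phi_conj \<sigma> y \<le> phi_conj \<omega> (D * y) / D + A"
  unfolding phi_conj_def
proof (rule cSUP_least)
  show "{0::real..} \<noteq> {}" by auto
  fix s :: real assume s: "s \<in> {0..}"
  have "bdd_above ((\<lambda>s. s * (D * y) - \<omega> (exp s)) ` {0..})"
    using D y by (intro bdd_above_phi_conj[OF ln_small nonneg]) auto
  then have "s * (D * y) - \<omega> (exp s) \<le> (SUP s\<in>{0..}. s * (D * y) - \<omega> (exp s))"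
    by (rule cSUP_upper[OF s])
  then have "(s * (D * y) - \<omega> (exp s)) / D \<le> (SUP s\<in>{0..}. s * (D * y) - \<omega> (exp s)) / D"
    using D by (simp add: divide_right_mono)
  moreover have "(s * (D * y) - \<omega> (exp s)) / D = s * y - \<omega> (exp s) / D"
    using D by (simp add: field_simps)
  moreover have "\<omega> (exp s) / D \<le> \<sigma> (exp s) + A"
    using dom[of "exp s"] s D by (simp add: field_simps)
  ultimately show "s * y - \<sigma> (exp s) \<le> (SUP s\<in>{0..}. s * (D * y) - \<omega> (exp s)) / D + A"
    by linarith
qed

lemma weight_matrix_le_rescaled:
  assumes D: "D > 0" and x: "x > 0"
    and conj: "phi_conj \<sigma> (x * real k) \<le> phi_conj \<omega> (D * (x * real k)) / D + A"
  shows "weight_matrix \<sigma> x k \<le> exp (A / x) * weight_matrix \<omega> (D * x) k"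
proof -
  have "phi_conj \<sigma> (x * real k) / x \<le> A / x + phi_conj \<omega> (D * x * real k) / (D * x)"
    using divide_right_mono[OF conj, of x] x D by (simp add: field_simps mult.assoc)
  then show ?thesis
    unfolding weight_matrix_def by (simp flip: exp_add)
qed

theorem lemma3p15:
  fixes \<omega> \<sigma> :: "real \<Rightarrow> real"
  assumes "weight_function \<omega>" and "non_quasianalytic \<omega>"
    and "heir \<sigma> \<omega>"
    and "\<forall>t\<in>{0..1}. \<omega> t = 0" and "\<forall>t\<in>{0..1}. \<sigma> t = 0"
  shows "\<exists>C\<ge>1. \<forall>x>0. \<forall>k::nat.
           weight_matrix \<sigma> x k \<le> exp (1 / x) * weight_matrix \<omega> (C * x) k"
proof -
  obtain D where "D \<ge> 1" and dom: "\<And>t. t > 0 \<Longrightarrow> \<omega> t \<le> D * (\<sigma> t + 1)"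
    using heir_dominates[OF assms(1,3)] by blast
  have ln_small: "ln \<in> o[at_top](\<omega>)" and nonneg: "\<And>t. t \<ge> 0 \<Longrightarrow> \<omega> t \<ge> 0"
    using assms(1) unfolding weight_function_def by blast+
  have conj: "phi_conj \<sigma> y \<le> phi_conj \<omega> (D * y) / D + 1" if "y \<ge> 0" for y
    using \<open>D \<ge> 1\<close> dom that by (intro phi_conj_le_rescaled[OF ln_small nonneg]) auto
  show ?thesis
  proof (intro exI[of _ D] conjI allI impI \<open>D \<ge> 1\<close>)
    fix x :: real and k :: nat assume "x > 0"
    then show "weight_matrix \<sigma> x k \<le> exp (1 / x) * weight_matrix \<omega> (D * x) k"
      using \<open>D \<ge> 1\<close> conj[of "x * real k"] by (intro weight_matrix_le_rescaled) auto
  qed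
qed

end
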